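(* Let $P$ be the Petersen graph and $\mathcal{N}P$ its normal graph algebra over a field $\mathbb{F}$ of characteristic not $2$. For distinct $i,j\in\{1,\dots,6\}$ let $\mathbf{ij}\in U_P$ denote the vertex $\{i,j\}$ if $i,j\le5$, and $u_i$ if $j=6$ (similarly $u_j$ if $i=6$). For $1\le i\le 6$ let $\mathcal{F}_i=\{\langle\mathbf{ij}\rangle: j\in\{1,\dots,6\},\,j\neq i\}$, a set of five one-dimensional subspaces of $U_P$. If $g$ is an automorphism of $\mathcal{N}P$ such that for each $i$, $g$ maps every member of $\mathcal{F}_i$ to a member of $\mathcal{F}_i$, then $g$ is a scalar automorphism.
   Context: The Petersen graph $P$ has as vertices the 2-element subsets $\{i,j\}$ of $\{1,\dots,5\}$, two vertices adjacent iff disjoint. $\mathcal{N}P=U_P\oplus\mathfrak{Z}_P$ with $U_P$ having basis the vertices and $\mathfrak{Z}_P$ basis the edges, commutative bilinear product determined by: for distinct vertices $x,y$, $xy$ is the edge joining them if adjacent and $0$ otherwise; $x^2$ is the sum of the three edges at $x$; products involving $\mathfrak{Z}_P$ are $0$. For $1\le i\le5$, $u_i=\frac12\left(\sum_{i\notin A}A-\sum_{i\in A}A\right)$, sums over vertices $A$. An automorphism of $\mathcal{N}P$ is a product-preserving linear bijection mapping $U_P$ onto $U_P$ and $\mathfrak{Z}_P$ onto $\mathfrak{Z}_P$; it is scalar if for some $\alpha\neq0$ it is $u\mapsto\alpha u$ on $U_P$ and $\mathfrak{z}\mapsto\alpha^2\mathfrak{z}$ on $\mathfrak{Z}_P$.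 *)

theory Defs
  imports Main
begin

text \<open>Petersen graph: vertices are the 2-subsets of {1..5}; adjacency = disjointness.\<close>

definition PV :: "nat set set" where
  "PV = {A. A \<subseteq> {1..5} \<and> card A = 2}"

definition PE :: "nat set set set" where
  "PE = {{A, B} | A B. A \<in> PV \<and> B \<in> PV \<and> A \<inter> B = {}}"

text \<open>Elements of the normal graph algebra NP = U_P (+) Z_P over a field 'a:
  pairs (u, z) of coordinate functions, u on the vertex basis, z on the edge basis.\<close>

type_synonym 'a np = "(nat set \<Rightarrow> 'a) \<times> (nat set set \<Rightarrow> 'a)"

definition UP :: "'a::field np set" where
  "UP = {(u, z). (\<forall>A. A \<notin> PV \<longrightarrow> u A = 0) \<and> (\<forall>e. z e = 0)}"

definition ZP :: "'a::field np set" where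
  "ZP = {(u, z). (\<forall>A. u A = 0) \<and> (\<forall>e. e \<notin> PE \<longrightarrow> z e = 0)}"

definition NP :: "'a::field np set" where
  "NP = {(u, z). (\<forall>A. A \<notin> PV \<longrightarrow> u A = 0) \<and> (\<forall>e. e \<notin> PE \<longrightarrow> z e = 0)}"

definition np_add :: "'a::field np \<Rightarrow> 'a np \<Rightarrow> 'a np" where
  "np_add x y = (\<lambda>A. fst x A + fst y A, \<lambda>e. snd x e + snd y e)"

definition np_smult :: "'a::field \<Rightarrow> 'a np \<Rightarrow> 'a np" where
  "np_smult c x = (\<lambda>A. c * fst x A, \<lambda>e. c * snd x e)"

text \<open>Bilinear extension of: xy = edge {x,y} if x,y adjacent, 0 if distinct non-adjacent,
  x^2 = sum of the three edges at x, products with Z_P zero.\<close>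

definition np_mult :: "'a::field np \<Rightarrow> 'a np \<Rightarrow> 'a np" where
  "np_mult x y = (\<lambda>A. 0,
     \<lambda>e. if e \<in> PE then (\<Sum>A\<in>e. fst x A) * (\<Sum>A\<in>e. fst y A) else 0)"

definition np_automorphism :: "('a::field np \<Rightarrow> 'a np) \<Rightarrow> bool" where
  "np_automorphism g \<longleftrightarrow>
     bij_betw g NP NP \<and>
     (\<forall>x\<in>NP. \<forall>y\<in>NP. g (np_add x y) = np_add (g x) (g y)) \<and>
     (\<forall>c. \<forall>x\<in>NP. g (np_smult c x) = np_smult c (g x)) \<and>
     (\<forall>x\<in>NP. \<forall>y\<in>NP. g (np_mult x y) = np_mult (g x) (g y)) \<and>
     g ` UP = UP \<and> g ` ZP = ZP"

definition np_scalar :: "('a::field np \<Rightarrow> 'a np) \<Rightarrow> bool" where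
  "np_scalar g \<longleftrightarrow> (\<exists>\<alpha>::'a. \<alpha> \<noteq> 0 \<and>
     (\<forall>x\<in>UP. g x = np_smult \<alpha> x) \<and> (\<forall>x\<in>ZP. g x = np_smult (\<alpha>^2) x))"

definition vtx :: "nat set \<Rightarrow> 'a::field np" where
  "vtx A = (\<lambda>B. if B = A then 1 else 0, \<lambda>e. 0)"

definition uvec :: "nat \<Rightarrow> 'a::field np" where
  "uvec i = (\<lambda>A. if A \<in> PV then (if i \<notin> A then 1/2 else - (1/2)) else 0, \<lambda>e. 0)"

definition bold :: "nat \<Rightarrow> nat \<Rightarrow> 'a::field np" where
  "bold i j = (if j = 6 then uvec i else if i = 6 then uvec j else vtx {i, j})"

definition line :: "'a::field np \<Rightarrow> 'a np set" where
  "line w = {np_smult c w | c. True}"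

definition Fam :: "nat \<Rightarrow> 'a::field np set set" where
  "Fam i = {line (bold i j) | j. j \<in> {1..6} \<and> j \<noteq> i}"

end

theory Submission
  imports Defs
begin

text \<open>The family condition puts the image of the vertex \<open>{i,j}\<close> on a line of \<open>\<F>\<^sub>i\<close>
  and on a line of \<open>\<F>\<^sub>j\<close>; since \<open>\<F>\<^sub>i \<inter> \<F>\<^sub>j = {\<langle>ij\<rangle>}\<close>, every vertex is an
  eigenvector of \<open>g\<close>.  The vector \<open>u\<^sub>1\<close> has nonzero coordinates at all ten vertices,
  so its image can only lie on the line \<open>\<langle>u\<^sub>1\<rangle>\<close>, which forces all ten eigenvalues to
  coincide, say with \<open>\<alpha>\<close>.  Every edge is a product of two vertices, so \<open>g\<close> acts as
  \<open>\<alpha>\<^sup>2\<close> on \<open>\<Zfrak>\<^sub>P\<close>.\<close>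

definition np_zero :: "'a::field np" where
  "np_zero = (\<lambda>_. 0, \<lambda>_. 0)"

definition np_sum :: "('b \<Rightarrow> 'a::field np) \<Rightarrow> 'b set \<Rightarrow> 'a np" where
  "np_sum f S = (\<lambda>A. \<Sum>s\<in>S. fst (f s) A, \<lambda>e. \<Sum>s\<in>S. snd (f s) e)"

definition np_linear :: "('a::field np \<Rightarrow> 'a np) \<Rightarrow> bool" where
  "np_linear g \<longleftrightarrow>
     (\<forall>x\<in>NP. \<forall>y\<in>NP. g (np_add x y) = np_add (g x) (g y)) \<and>
     (\<forall>c. \<forall>x\<in>NP. g (np_smult c x) = np_smult c (g x))"

definition edge :: "nat set set \<Rightarrow> 'a::field np" where
  "edge e = (\<lambda>_. 0, \<lambda>e'. if e' = e then 1 else 0)"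

lemma finite_PV: "finite PV"
  by (rule finite_subset[of _ "Pow {1..5}"]) (auto simp: PV_def)

lemma finite_PE: "finite PE"
  by (rule finite_subset[of _ "Pow PV"]) (auto simp: PE_def finite_PV)

lemma PV_iff: "{i, j} \<in> PV \<longleftrightarrow> i \<noteq> j \<and> i \<in> {1..5} \<and> j \<in> {1..5}"
  by (auto simp: PV_def card_insert_if)

lemma PV_obtain_pair:
  assumes "A \<in> PV"
  obtains i j where "A = {i, j}" "i \<noteq> j" "i \<in> {1..5}" "j \<in> {1..5}"
  using assms unfolding PV_def card_2_iff by auto

lemma np_smult_NP: "x \<in> NP \<Longrightarrow> np_smult c x \<in> NP"
  by (auto simp: NP_def np_smult_def)

lemma fst_np_smult [simp]: "fst (np_smult c x) A = c * fst x A"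
  by (simp add: np_smult_def)

lemma np_smult_zero: "np_smult 0 x = np_zero"
  by (simp add: np_smult_def np_zero_def)

lemma np_smult_np_smult: "np_smult a (np_smult b x) = np_smult (a * b) x"
  by (simp add: np_smult_def mult.assoc)

lemma np_sum_NP: "f ` S \<subseteq> NP \<Longrightarrow> np_sum f S \<in> NP"
  by (fastforce simp: NP_def np_sum_def intro: sum.neutral)

lemma np_sum_empty: "np_sum f {} = np_zero"
  by (simp add: np_sum_def np_zero_def)

lemma np_sum_insert:
  "finite S \<Longrightarrow> s \<notin> S \<Longrightarrow> np_sum f (insert s S) = np_add (f s) (np_sum f S)"
  by (simp add: np_sum_def np_add_def)

lemma np_automorphism_imp_linear: "np_automorphism g \<Longrightarrow> np_linear g"
  by (simp add: np_automorphism_def np_linear_def)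

lemma np_linear_np_smult: "np_linear (np_smult d)"
  by (simp add: np_linear_def np_add_def np_smult_def algebra_simps)

lemma np_linear_add:
  "np_linear g \<Longrightarrow> x \<in> NP \<Longrightarrow> y \<in> NP \<Longrightarrow> g (np_add x y) = np_add (g x) (g y)"
  unfolding np_linear_def by blast

lemma np_linear_smult:
  "np_linear g \<Longrightarrow> x \<in> NP \<Longrightarrow> g (np_smult c x) = np_smult c (g x)"
  unfolding np_linear_def by blast

lemma np_zero_NP: "np_zero \<in> NP"
  by (simp add: np_zero_def NP_def)

lemma np_linear_zero:
  assumes "np_linear g"
  shows "g np_zero = np_zero"
proof -
  have "g np_zero = g (np_smult 0 np_zero)"
    by (simp add: np_zero_def np_smult_def)
  also have "\<dots> = np_smult 0 (g np_zero)"
    using assms np_zero_NP by (rule np_linear_smult)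
  also have "\<dots> = np_zero"
    by (simp add: np_smult_def np_zero_def)
  finally show ?thesis .
qed

lemma np_linear_sum:
  assumes "np_linear g" "finite S" "f ` S \<subseteq> NP"
  shows "g (np_sum f S) = np_sum (g \<circ> f) S"
  using assms(2,3)
proof (induction S rule: finite_induct)
  case empty
  show ?case using np_linear_zero[OF assms(1)] by (simp add: np_sum_empty)
next
  case (insert s S)
  then have "f s \<in> NP" "np_sum f S \<in> NP"
    by (auto intro: np_sum_NP)
  with insert show ?case
    by (simp add: np_sum_insert np_linear_add[OF assms(1)])
qed

lemma np_sum_cong: "(\<And>s. s \<in> S \<Longrightarrow> f s = f' s) \<Longrightarrow> np_sum f S = np_sum f' S"
  by (simp add: np_sum_def)

lemma np_linear_eq_on_combination:
  assumes g: "np_linear g" and h: "np_linear h" and "finite S" "b ` S \<subseteq> NP"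
    and gh: "\<And>s. s \<in> S \<Longrightarrow> g (b s) = h (b s)"
  shows "g (np_sum (\<lambda>s. np_smult (c s) (b s)) S) = h (np_sum (\<lambda>s. np_smult (c s) (b s)) S)"
    (is "g ?x = h ?x")
proof -
  have NP: "(\<lambda>s. np_smult (c s) (b s)) ` S \<subseteq> NP"
    using assms(4) by (auto intro!: np_smult_NP)
  have "g ?x = np_sum (\<lambda>s. np_smult (c s) (g (b s))) S"
    using np_linear_sum[OF g assms(3) NP] assms(4)
    by (auto simp: np_linear_smult[OF g] intro!: np_sum_cong)
  also have "\<dots> = np_sum (\<lambda>s. np_smult (c s) (h (b s))) S"
    using gh by (auto intro: np_sum_cong)
  also have "\<dots> = h ?x"
    using np_linear_sum[OF h assms(3) NP] assms(4)
    by (auto simp: np_linear_smult[OF h] intro!: np_sum_cong)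
  finally show ?thesis .
qed

lemma fst_np_sum_smult_vtx:
  "fst (np_sum (\<lambda>A. np_smult (c A) (vtx A)) PV) B = (if B \<in> PV then c B else 0)"
proof -
  have "fst (np_sum (\<lambda>A. np_smult (c A) (vtx A)) PV) B = (\<Sum>A\<in>PV. if B = A then c A else 0)"
    by (simp add: np_sum_def np_smult_def vtx_def if_distrib[of "(*) _"] cong: if_cong)
  then show ?thesis
    by (simp add: finite_PV)
qed

lemma UP_eq_sum_vtx:
  assumes "x \<in> UP"
  shows "x = np_sum (\<lambda>A. np_smult (fst x A) (vtx A)) PV"
proof (rule prod_eqI)
  show "fst x = fst (np_sum (\<lambda>A. np_smult (fst x A) (vtx A)) PV)"
    using assms by (auto simp: fst_np_sum_smult_vtx UP_def)
  show "snd x = snd (np_sum (\<lambda>A. np_smult (fst x A) (vtx A)) PV)"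
    using assms by (auto simp: np_sum_def np_smult_def vtx_def UP_def)
qed

lemma snd_np_sum_smult_edge:
  "snd (np_sum (\<lambda>e. np_smult (c e) (edge e)) PE) e' = (if e' \<in> PE then c e' else 0)"
proof -
  have "snd (np_sum (\<lambda>e. np_smult (c e) (edge e)) PE) e' = (\<Sum>e\<in>PE. if e' = e then c e else 0)"
    by (simp add: np_sum_def np_smult_def edge_def if_distrib[of "(*) _"] cong: if_cong)
  then show ?thesis
    by (simp add: finite_PE)
qed

lemma ZP_eq_sum_edge:
  assumes "x \<in> ZP"
  shows "x = np_sum (\<lambda>e. np_smult (snd x e) (edge e)) PE"
proof (rule prod_eqI)
  show "fst x = fst (np_sum (\<lambda>e. np_smult (snd x e) (edge e)) PE)"
    using assms by (auto simp: np_sum_def np_smult_def edge_def ZP_def)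
  show "snd x = snd (np_sum (\<lambda>e. np_smult (snd x e) (edge e)) PE)"
    using assms by (auto simp: snd_np_sum_smult_edge ZP_def)
qed

lemma vtx_NP: "A \<in> PV \<Longrightarrow> vtx A \<in> NP"
  by (auto simp: vtx_def NP_def)

lemma edge_NP: "e \<in> PE \<Longrightarrow> edge e \<in> NP"
  by (auto simp: edge_def NP_def)

lemma np_linear_eq_on_UP:
  assumes "np_linear g" "np_linear h" "\<And>A. A \<in> PV \<Longrightarrow> g (vtx A) = h (vtx A)" "x \<in> UP"
  shows "g x = h x"
proof -
  have "g (np_sum (\<lambda>A. np_smult (fst x A) (vtx A)) PV) = h (np_sum (\<lambda>A. np_smult (fst x A) (vtx A)) PV)"
    by (rule np_linear_eq_on_combination[OF assms(1,2) finite_PV]) (auto simp: vtx_NP assms(3))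
  then show ?thesis
    by (simp only: UP_eq_sum_vtx[OF assms(4), symmetric])
qed

lemma np_linear_eq_on_ZP:
  assumes "np_linear g" "np_linear h" "\<And>e. e \<in> PE \<Longrightarrow> g (edge e) = h (edge e)" "x \<in> ZP"
  shows "g x = h x"
proof -
  have "g (np_sum (\<lambda>e. np_smult (snd x e) (edge e)) PE) = h (np_sum (\<lambda>e. np_smult (snd x e) (edge e)) PE)"
    by (rule np_linear_eq_on_combination[OF assms(1,2) finite_PE]) (auto simp: edge_NP assms(3))
  then show ?thesis
    by (simp only: ZP_eq_sum_edge[OF assms(4), symmetric])
qed

lemma np_smult_eq_imp_fst_eq:
  "np_smult c x = np_smult d y \<Longrightarrow> c * fst x A = d * fst y A"
  by (metis fst_np_smult)

lemma fst_vtx: "fst (vtx A) B = (if B = A then 1 else 0)"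
  by (simp add: vtx_def)

text \<open>In characteristic \<open>2\<close> the field division gives \<open>1/2 = 0\<close>, so every \<open>u\<^sub>i\<close> is zero.\<close>

lemma fst_uvec_ne_zero:
  assumes "(2::'a::field) \<noteq> 0" "A \<in> PV"
  shows "fst (uvec i :: 'a np) A \<noteq> 0"
  using assms by (simp add: uvec_def)

lemma smult_vtx_eq_smult_vtx_imp_eq:
  assumes "np_smult c (vtx A) = np_smult (d::'a::field) (vtx B)" "c \<noteq> 0"
  shows "A = B"
  using np_smult_eq_imp_fst_eq[OF assms(1), of A] assms(2) by (simp add: fst_vtx split: if_splits)

lemma smult_eq_smult_imp_ne_zero:
  "np_smult c x = np_smult d y \<Longrightarrow> c \<noteq> 0 \<Longrightarrow> fst x A \<noteq> 0 \<Longrightarrow> d \<noteq> 0"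
  by (metis np_smult_eq_imp_fst_eq mult_eq_0_iff)

lemma smult_uvec_ne_smult_vtx:
  assumes "(2::'a::field) \<noteq> 0" "c \<noteq> 0"
  shows "np_smult c (uvec i) \<noteq> np_smult (d::'a) (vtx A)"
proof
  assume eq: "np_smult c (uvec i) = np_smult d (vtx A)"
  have "{1, 2} \<in> PV" "{3, 4} \<in> PV" "{1, 2} \<noteq> ({3, 4} :: nat set)"
    by (simp_all add: PV_iff doubleton_eq_iff)
  then obtain B where B: "B \<in> PV" "B \<noteq> A"
    by metis
  have "c * fst (uvec i :: 'a np) B = 0"
    using np_smult_eq_imp_fst_eq[OF eq, of B] B(2) by (simp add: fst_vtx)
  with assms B(1) show False
    using fst_uvec_ne_zero by fastforce
qed

lemma smult_uvec_ne_smult_uvec: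
  assumes "(2::'a::field) \<noteq> 0" "c \<noteq> 0" "i \<in> {1..5}" "j \<in> {1..5}" "i \<noteq> j"
  shows "np_smult c (uvec i) \<noteq> np_smult (d::'a) (uvec j)"
proof
  assume eq: "np_smult c (uvec i) = np_smult d (uvec j)"
  have "card ({1..5::nat} - {i, j}) = 3"
    using assms(3-5) by (simp add: card_Diff_subset)
  then obtain m m' where m: "m \<in> {1..5}" "m' \<in> {1..5}" "m \<noteq> m'" "m \<notin> {i, j}" "m' \<notin> {i, j}"
    unfolding card_3_iff by blast
  \<comment> \<open>the vertex \<open>{m,m'}\<close> avoids both \<open>i\<close> and \<open>j\<close>, the vertex \<open>{i,m}\<close> only \<open>j\<close>\<close>
  have "c * (1/2) = d * (1/2)"
    using np_smult_eq_imp_fst_eq[OF eq, of "{m, m'}"] m by (simp add: uvec_def PV_iff)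
  moreover have "c * - (1/2) = d * (1/2)"
    using np_smult_eq_imp_fst_eq[OF eq, of "{i, m}"] m assms(3,5) by (simp add: uvec_def PV_iff)
  ultimately show False
    using assms(1,2) by (simp add: field_simps)
qed

lemma bold_eq:
  assumes "i \<in> {1..5}" "k \<in> {1..6}"
  shows "bold i k = (if k = 6 then uvec i else vtx {i, k})"
  using assms by (simp add: bold_def)

lemma smult_bold_eq_smult_bold_imp_eq:
  assumes "(2::'a::field) \<noteq> 0" "c \<noteq> 0" "i \<in> {1..5}" "j \<in> {1..5}" "i \<noteq> j"
    and "k \<in> {1..6}" "k \<noteq> i" "l \<in> {1..6}" "l \<noteq> j"
    and eq: "np_smult c (bold i k) = np_smult (d::'a) (bold j l)"
  shows "k = j"
proof (cases "k = 6")
  case True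
  then have eq': "np_smult c (uvec i) = np_smult d (bold j l)"
    using eq bold_eq[OF assms(3,6)] by metis
  have "bold j l = uvec j \<or> bold j l = vtx {j, l}"
    using bold_eq[OF assms(4,8)] by metis
  then have False
    using eq' smult_uvec_ne_smult_uvec[OF assms(1-5)] smult_uvec_ne_smult_vtx[OF assms(1,2)]
    by metis
  then show ?thesis ..
next
  case False
  then have eq': "np_smult c (vtx {i, k}) = np_smult d (bold j l)"
    using eq bold_eq[OF assms(3,6)] by metis
  show ?thesis
  proof (cases "l = 6")
    case True
    then have "np_smult d (uvec j) = np_smult c (vtx {i, k})"
      using eq' bold_eq[OF assms(4,8)] by metis
    moreover have "d \<noteq> 0"
      using smult_eq_smult_imp_ne_zero[OF eq' assms(2), of "{i, k}"] by (simp add: fst_vtx)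
    ultimately show ?thesis
      using smult_uvec_ne_smult_vtx[OF assms(1)] by blast
  next
    case False
    then have "{i, k} = {j, l}"
      using eq' bold_eq[OF assms(4,8)] smult_vtx_eq_smult_vtx_imp_eq[OF _ assms(2)] by metis
    then show ?thesis
      using assms(5) by (auto simp: doubleton_eq_iff)
  qed
qed

lemma np_automorphism_ne_zero:
  assumes "np_automorphism g" "x \<in> NP" "x \<noteq> np_zero"
  shows "g x \<noteq> np_zero"
proof
  assume "g x = np_zero"
  also have "np_zero = g np_zero"
    using np_linear_zero[OF np_automorphism_imp_linear[OF assms(1)]] by simp
  finally have "g x = g np_zero" .
  moreover have "inj_on g NP"
    using assms(1) by (simp add: np_automorphism_def bij_betw_def)
  ultimately show False
    using assms(2,3) np_zero_NP by (auto dest: inj_onD)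
qed

lemma np_automorphism_mult:
  "np_automorphism g \<Longrightarrow> x \<in> NP \<Longrightarrow> y \<in> NP \<Longrightarrow> g (np_mult x y) = np_mult (g x) (g y)"
  by (simp add: np_automorphism_def)

lemma vtx_ne_np_zero: "vtx A \<noteq> np_zero"
  by (simp add: vtx_def np_zero_def fun_eq_iff)

lemma image_bold_in_Fam_line:
  assumes fam: "\<forall>i\<in>{1..6}. \<forall>L\<in>Fam i. g ` L \<in> Fam i"
    and "i \<in> {1..6}" "j \<in> {1..6}" "j \<noteq> i"
  obtains k c where "k \<in> {1..6}" "k \<noteq> i" "g (bold i j) = np_smult c (bold i k)"
proof -
  have "line (bold i j) \<in> Fam i"
    using assms(3,4) unfolding Fam_def by blast
  then have "g ` line (bold i j) \<in> Fam i"
    using fam assms(2) by blast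
  then obtain k where k: "k \<in> {1..6}" "k \<noteq> i" "g ` line (bold i j) = line (bold i k)"
    unfolding Fam_def by blast
  have "bold i j = np_smult 1 (bold i j)"
    by (simp add: np_smult_def)
  then have "g (bold i j) \<in> line (bold i k)"
    using k(3) unfolding line_def by blast
  with k that show ?thesis
    unfolding line_def by blast
qed

lemma vtx_eigenvector:
  assumes "(2::'a::field) \<noteq> 0" "np_automorphism (g :: 'a np \<Rightarrow> 'a np)"
    and fam: "\<forall>i\<in>{1..6}. \<forall>L\<in>Fam i. g ` L \<in> Fam i"
    and "A \<in> PV"
  obtains c where "c \<noteq> 0" "g (vtx A) = np_smult c (vtx A)"
proof -
  obtain i j where ij: "A = {i, j}" "i \<noteq> j" "i \<in> {1..5}" "j \<in> {1..5}"
    using PV_obtain_pair[OF assms(4)] .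
  have "bold i j = vtx A" "bold j i = vtx A"
    using ij by (auto simp: bold_def insert_commute)
  moreover obtain k c where k: "k \<in> {1..6}" "k \<noteq> i" "g (bold i j) = np_smult c (bold i k)"
    using image_bold_in_Fam_line[OF fam, of i j] ij by auto
  moreover obtain l d where l: "l \<in> {1..6}" "l \<noteq> j" "g (bold j i) = np_smult d (bold j l)"
    using image_bold_in_Fam_line[OF fam, of j i] ij by auto
  ultimately have eq: "np_smult c (bold i k) = np_smult d (bold j l)"
    by metis
  have "g (vtx A) \<noteq> np_zero"
    using np_automorphism_ne_zero[OF assms(2)] vtx_NP[OF assms(4)] vtx_ne_np_zero by blast
  then have "c \<noteq> 0"
    using k(3) \<open>bold i j = vtx A\<close> np_smult_zero by metis
  moreover have "k = j"
    using smult_bold_eq_smult_bold_imp_eq[OF assms(1) \<open>c \<noteq> 0\<close> ij(3,4,2) k(1,2) l(1,2) eq] .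
  ultimately show ?thesis
    using that k(3) \<open>bold i j = vtx A\<close> by metis
qed

lemma np_linear_fst_on_UP:
  assumes "np_linear g" "\<And>A. A \<in> PV \<Longrightarrow> g (vtx A) = np_smult (c A) (vtx A)"
    and "x \<in> UP" "B \<in> PV"
  shows "fst (g x) B = c B * fst x B"
proof -
  have "g x = np_sum (g \<circ> (\<lambda>A. np_smult (fst x A) (vtx A))) PV"
    using np_linear_sum[OF assms(1) finite_PV] UP_eq_sum_vtx[OF assms(3)]
    by (metis (no_types, lifting) image_subset_iff np_smult_NP vtx_NP)
  also have "\<dots> = np_sum (\<lambda>A. np_smult (fst x A * c A) (vtx A)) PV"
    using assms(2) by (intro np_sum_cong) (simp add: np_linear_smult[OF assms(1)] vtx_NP np_smult_np_smult)
  finally show ?thesis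
    using assms(4) by (simp add: fst_np_sum_smult_vtx)
qed

lemma vtx_common_eigenvalue:
  assumes "(2::'a::field) \<noteq> 0" "np_automorphism (g :: 'a np \<Rightarrow> 'a np)"
    and fam: "\<forall>i\<in>{1..6}. \<forall>L\<in>Fam i. g ` L \<in> Fam i"
  obtains \<alpha> where "\<alpha> \<noteq> 0" "\<And>A. A \<in> PV \<Longrightarrow> g (vtx A) = np_smult \<alpha> (vtx A)"
proof -
  have "\<forall>A\<in>PV. \<exists>c. c \<noteq> 0 \<and> g (vtx A) = np_smult c (vtx A)"
    using vtx_eigenvector[OF assms] by metis
  then obtain c where c: "\<And>A. A \<in> PV \<Longrightarrow> c A \<noteq> 0" "\<And>A. A \<in> PV \<Longrightarrow> g (vtx A) = np_smult (c A) (vtx A)"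
    by metis
  have u1: "uvec 1 \<in> (UP :: 'a np set)"
    by (simp add: UP_def uvec_def)
  have gu1: "fst (g (uvec 1)) A = c A * fst (uvec 1 :: 'a np) A" if "A \<in> PV" for A
    using np_linear_fst_on_UP[OF np_automorphism_imp_linear[OF assms(2)] c(2) u1 that] .
  have "bold 1 6 = (uvec 1 :: 'a np)"
    by (simp add: bold_def)
  then obtain k \<alpha> where k: "k \<in> {1..6}" "k \<noteq> 1" "g (uvec 1) = np_smult \<alpha> (bold 1 k)"
    using image_bold_in_Fam_line[OF fam, of 1 6] by auto
  have "k = 6"
  proof (rule ccontr)
    assume "k \<noteq> 6"
    then have "g (uvec 1) = np_smult \<alpha> (vtx {1, k})"
      using k(3) by (simp add: bold_def)
    moreover have B: "{2, 3} \<in> PV" "{2, 3} \<noteq> {1, k}"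
      by (auto simp: PV_iff doubleton_eq_iff)
    ultimately have "c {2, 3} * fst (uvec 1 :: 'a np) {2, 3} = 0"
      using gu1[of "{2, 3}"] by (simp add: fst_vtx)
    then show False
      using c(1)[OF B(1)] fst_uvec_ne_zero[OF assms(1) B(1)] by simp
  qed
  then have g_uvec: "g (uvec 1) = np_smult \<alpha> (uvec 1)"
    using k(3) by (simp add: bold_def)
  have c_eq: "c A = \<alpha>" if "A \<in> PV" for A
  proof -
    have "\<alpha> * fst (uvec 1 :: 'a np) A = c A * fst (uvec 1 :: 'a np) A"
      using gu1[OF that] g_uvec by simp
    then show ?thesis
      using fst_uvec_ne_zero[OF assms(1) that] by auto
  qed
  have "{1, 2} \<in> PV"
    by (simp add: PV_iff)
  then have "\<alpha> \<noteq> 0"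
    using c(1) c_eq by metis
  with that show ?thesis
    using c(2) c_eq by simp
qed

lemma np_mult_vtx_vtx:
  assumes "A \<in> PV" "B \<in> PV" "A \<inter> B = {}"
  shows "np_mult (vtx A) (vtx B) = (edge {A, B} :: 'a::field np)"
proof -
  have sum_vtx: "(\<Sum>C\<in>e. fst (vtx D :: 'a np) C) = (if D \<in> e then 1 else 0)" if "e \<in> PE" for D e
  proof -
    have "finite e"
      using that by (auto simp: PE_def)
    then show ?thesis
      by (simp add: fst_vtx)
  qed
  have "A \<noteq> B"
    using assms by (auto simp: PV_def)
  then have "A \<in> e \<and> B \<in> e \<longleftrightarrow> e = {A, B}" if "e \<in> PE" for e
    using that by (auto simp: PE_def)
  moreover have "{A, B} \<in> PE"
    using assms by (auto simp: PE_def)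
  ultimately show ?thesis
    by (auto simp: np_mult_def edge_def sum_vtx fun_eq_iff)
qed

lemma np_mult_smult: "np_mult (np_smult c x) (np_smult d y) = np_smult (c * d) (np_mult x y)"
  by (simp add: np_mult_def np_smult_def sum_distrib_left[symmetric] fun_eq_iff)

theorem proposition10p3:
  fixes g :: "'a::field np \<Rightarrow> 'a np"
  assumes char: "(2::'a) \<noteq> 0"
    and aut: "np_automorphism g"
    and fam: "\<forall>i\<in>{1..6}. \<forall>L\<in>Fam i. g ` L \<in> Fam i"
  shows "np_scalar g"
proof -
  have lin: "np_linear g"
    using aut by (rule np_automorphism_imp_linear)
  obtain \<alpha> where "\<alpha> \<noteq> 0" and vtx: "\<And>A. A \<in> PV \<Longrightarrow> g (vtx A) = np_smult \<alpha> (vtx A)"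
    using vtx_common_eigenvalue[OF char aut fam] by blast
  have edge: "g (edge e) = np_smult (\<alpha>\<^sup>2) (edge e)" if "e \<in> PE" for e
  proof -
    obtain A B where AB: "A \<in> PV" "B \<in> PV" "A \<inter> B = {}" "e = {A, B}"
      using \<open>e \<in> PE\<close> by (auto simp: PE_def)
    have "g (edge e) = g (np_mult (vtx A) (vtx B))"
      using AB by (simp add: np_mult_vtx_vtx)
    also have "\<dots> = np_mult (g (vtx A)) (g (vtx B))"
      using AB by (simp add: np_automorphism_mult[OF aut] vtx_NP)
    also have "\<dots> = np_smult (\<alpha>\<^sup>2) (edge e)"
      using AB by (simp add: vtx np_mult_smult np_mult_vtx_vtx power2_eq_square)
    finally show ?thesis .
  qed
  have "\<forall>x\<in>UP. g x = np_smult \<alpha> x"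
    using np_linear_eq_on_UP[OF lin np_linear_np_smult vtx] by blast
  moreover have "\<forall>x\<in>ZP. g x = np_smult (\<alpha>\<^sup>2) x"
    using np_linear_eq_on_ZP[OF lin np_linear_np_smult edge] by blast
  ultimately show ?thesis
    unfolding np_scalar_def using \<open>\<alpha> \<noteq> 0\<close> by blast
qed

end
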